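(* A set $\mathbf D$ of tilings of $[n]$ is a Condorcet super-domain if and only if for every 4-element subset $F=\{i<j<k<l\}\subseteq[n]$, the restriction $\mathbf D|_F=\{T\cap\Lambda^3(F): T\in\mathbf D\}$ is a Condorcet super-domain for the color set $F$.
   Context: For a finite totally ordered set $C$ of colors, let $\Lambda^3(C)$ be the set of 3-element subsets of $C$, a triple $\{a<b<c\}$ being written $abc$. For a 4-element subset $\{a<b<c<d\}\subseteq C$, its stick is the sequence $(abc,\ abd,\ acd,\ bcd)$. A tiling for the color set $C$ (the inversion set of a rhombus tiling of the zonogon $Z(C;2)$) is a subset $T\subseteq\Lambda^3(C)$ such that for every 4-element subset $G\subseteq C$, $T\cap\mathrm{stick}(G)$ is an initial segment or a final segment of $\mathrm{stick}(G)$ (empty set and whole stick allowed). Here $n\ge 4$, $[n]=\{1,\dots,n\}$ with its usual order, and "tiling" without qualification means tiling for the color set $[n]$; note that $T\cap\Lambda^3(F)$ is a tiling for $F$ whenever $T$ is a tiling for $[n]$. For a finite set $V$ of odd cardinality and a family $(T_v)_{v\in V}$ of tilings for $C$, $sm((T_v)_{v\in V})$ is the set of triples lying in $T_v$ for more than $|V|/2$ indices $v$. A set $\mathbf D$ of tilings for $C$ is a Condorcet super-domain for $C$ if for every finite $V$ of odd cardinality and every family $(T_v)_{v\in V}$ with all $T_v\in\mathbf D$, $sm((T_v)_{v\in V})$ is a tiling for $C$. *)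

theory Defs
  imports Main
begin

text \<open>Colors are natural numbers with their usual order; a triple abc is the 3-element set {a,b,c}.\<close>

definition Lambda3 :: "nat set \<Rightarrow> nat set set" where
  "Lambda3 C = {t. t \<subseteq> C \<and> card t = 3}"

text \<open>Stick of a 4-set {a<b<c<d}: the list [abc, abd, acd, bcd].\<close>
definition stick :: "nat set \<Rightarrow> nat set list" where
  "stick G = map (\<lambda>x. G - {x}) (rev (sorted_list_of_set G))"

definition is_tiling :: "nat set \<Rightarrow> nat set set \<Rightarrow> bool" where
  "is_tiling C T \<longleftrightarrow> T \<subseteq> Lambda3 C \<and>
     (\<forall>G. G \<subseteq> C \<and> card G = 4 \<longrightarrow>
        (\<exists>k. T \<inter> set (stick G) = set (take k (stick G))
            \<or> T \<inter> set (stick G) = set (drop k (stick G))))"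

definition sm :: "'v set \<Rightarrow> ('v \<Rightarrow> nat set set) \<Rightarrow> nat set set" where
  "sm V T = {t. 2 * card {v \<in> V. t \<in> T v} > card V}"

definition condorcet_super_domain :: "nat set \<Rightarrow> nat set set set \<Rightarrow> bool" where
  "condorcet_super_domain C D \<longleftrightarrow>
     (\<forall>(V :: nat set) T. finite V \<and> odd (card V) \<and> (\<forall>v\<in>V. T v \<in> D)
        \<longrightarrow> is_tiling C (sm V T))"

end

theory Submission
  imports Defs
begin

text \<open>Being a tiling and taking the simple majority are both local: a set of triples is a
  tiling for C iff its trace on every 4-subset G of C is a tiling for G, and the majority commutes
  with intersecting all ballots with Lambda3 G. So the majority of ballots from D is a tiling iff,
  for every G, the majority of the restricted ballots is a tiling for G.\<close>

lemma sm_Int: "sm V (\<lambda>v. S v \<inter> L) = sm V S \<inter> L"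
proof -
  have "t \<in> sm V (\<lambda>v. S v \<inter> L) \<longleftrightarrow> t \<in> sm V S \<inter> L" for t
    by (cases "t \<in> L") (simp_all add: sm_def)
  then show ?thesis by blast
qed

lemma sm_cong: "(\<And>v. v \<in> V \<Longrightarrow> S v = S' v) \<Longrightarrow> sm V S = sm V S'"
  unfolding sm_def by (metis (mono_tags, lifting) Collect_cong)

lemma sm_subset:
  assumes "\<forall>v\<in>V. S v \<subseteq> A"
  shows "sm V S \<subseteq> A"
proof
  fix t assume "t \<in> sm V S"
  then have "{v \<in> V. t \<in> S v} \<noteq> {}"
    unfolding sm_def by (cases "{v \<in> V. t \<in> S v} = {}") auto
  then show "t \<in> A" using assms by blast
qed

lemma set_stick_subset_Lambda3:
  assumes "G \<subseteq> F" "card G = 4"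
  shows "set (stick G) \<subseteq> Lambda3 F"
proof
  fix t assume "t \<in> set (stick G)"
  moreover have "finite G" using assms(2) by (simp add: card_ge_0_finite)
  ultimately obtain x where "x \<in> G" "t = G - {x}"
    unfolding stick_def by auto
  with \<open>finite G\<close> assms show "t \<in> Lambda3 F"
    unfolding Lambda3_def by auto
qed

definition stick_segment :: "nat set \<Rightarrow> nat set set \<Rightarrow> bool" where
  "stick_segment G T \<longleftrightarrow>
     (\<exists>k. T \<inter> set (stick G) = set (take k (stick G))
        \<or> T \<inter> set (stick G) = set (drop k (stick G)))"

lemma is_tiling_iff_stick_segment:
  "is_tiling C T \<longleftrightarrow>
     T \<subseteq> Lambda3 C \<and> (\<forall>G. G \<subseteq> C \<and> card G = 4 \<longrightarrow> stick_segment G T)"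
  unfolding is_tiling_def stick_segment_def by simp

lemma stick_segment_Int_Lambda3:
  assumes "G \<subseteq> F" "card G = 4"
  shows "stick_segment G (T \<inter> Lambda3 F) \<longleftrightarrow> stick_segment G T"
proof -
  have "T \<inter> Lambda3 F \<inter> set (stick G) = T \<inter> set (stick G)"
    using set_stick_subset_Lambda3[OF assms] by blast
  then show ?thesis
    unfolding stick_segment_def by simp
qed

lemma is_tiling_card_4_iff:
  assumes "card G = 4"
  shows "is_tiling G (T \<inter> Lambda3 G) \<longleftrightarrow> stick_segment G T"
proof
  assume "is_tiling G (T \<inter> Lambda3 G)"
  then have "stick_segment G (T \<inter> Lambda3 G)"
    using assms unfolding is_tiling_iff_stick_segment by blast
  then show "stick_segment G T"
    using stick_segment_Int_Lambda3[OF order_refl assms] by simp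
next
  assume segment: "stick_segment G T"
  have "stick_segment H (T \<inter> Lambda3 G)" if "H \<subseteq> G" "card H = 4" for H
  proof -
    have "H = G"
      using that assms by (metis card.infinite card_subset_eq zero_neq_numeral)
    then show ?thesis
      using segment stick_segment_Int_Lambda3[OF order_refl assms] by simp
  qed
  then show "is_tiling G (T \<inter> Lambda3 G)"
    unfolding is_tiling_iff_stick_segment by blast
qed

lemma is_tiling_iff_local:
  "is_tiling C T \<longleftrightarrow>
     T \<subseteq> Lambda3 C \<and> (\<forall>G. G \<subseteq> C \<and> card G = 4 \<longrightarrow> is_tiling G (T \<inter> Lambda3 G))"
  unfolding is_tiling_iff_stick_segment[of C] by (auto simp: is_tiling_card_4_iff)

lemma is_tiling_restrict:
  assumes "is_tiling C T" "F \<subseteq> C"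
  shows "is_tiling F (T \<inter> Lambda3 F)"
proof -
  have "stick_segment G (T \<inter> Lambda3 F)" if "G \<subseteq> F" "card G = 4" for G
    using assms that unfolding stick_segment_Int_Lambda3[OF that] is_tiling_iff_stick_segment
    by blast
  then show ?thesis
    unfolding is_tiling_iff_stick_segment by blast
qed

lemma condorcet_super_domainI:
  assumes "\<And>(V :: nat set) T. finite V \<Longrightarrow> odd (card V) \<Longrightarrow> \<forall>v\<in>V. T v \<in> D
             \<Longrightarrow> is_tiling C (sm V T)"
  shows "condorcet_super_domain C D"
  using assms unfolding condorcet_super_domain_def by blast

lemma condorcet_super_domainD:
  fixes V :: "nat set"
  assumes "condorcet_super_domain C D" "finite V" "odd (card V)" "\<forall>v\<in>V. T v \<in> D"
  shows "is_tiling C (sm V T)"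
  using assms unfolding condorcet_super_domain_def by blast

lemma condorcet_super_domain_restrict:
  assumes csd: "condorcet_super_domain C D" and "F \<subseteq> C"
  shows "condorcet_super_domain F ((\<lambda>T. T \<inter> Lambda3 F) ` D)"
proof (rule condorcet_super_domainI)
  fix V :: "nat set" and T'
  assume voters: "finite V" "odd (card V)"
    and "\<forall>v\<in>V. T' v \<in> (\<lambda>T. T \<inter> Lambda3 F) ` D"
  then have "\<forall>v\<in>V. \<exists>S. S \<in> D \<and> T' v = S \<inter> Lambda3 F"
    by blast
  then obtain S where S: "\<forall>v\<in>V. S v \<in> D \<and> T' v = S v \<inter> Lambda3 F"
    by (rule bchoice[THEN exE])
  with voters csd have "is_tiling C (sm V S)"
    by (intro condorcet_super_domainD) auto
  then have "is_tiling F (sm V S \<inter> Lambda3 F)"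
    using \<open>F \<subseteq> C\<close> by (rule is_tiling_restrict)
  moreover have "sm V T' = sm V S \<inter> Lambda3 F"
    unfolding sm_Int[symmetric] using S by (intro sm_cong) simp
  ultimately show "is_tiling F (sm V T')" by simp
qed

lemma condorcet_super_domain_if_local:
  assumes "\<forall>T\<in>D. T \<subseteq> Lambda3 C"
    and local: "\<forall>G. G \<subseteq> C \<and> card G = 4 \<longrightarrow>
       condorcet_super_domain G ((\<lambda>T. T \<inter> Lambda3 G) ` D)"
  shows "condorcet_super_domain C D"
proof (rule condorcet_super_domainI)
  fix V :: "nat set" and S
  assume voters: "finite V" "odd (card V)" "\<forall>v\<in>V. S v \<in> D"
  have "sm V S \<subseteq> Lambda3 C"
    using voters(3) assms(1) by (intro sm_subset) blast
  moreover have "is_tiling G (sm V S \<inter> Lambda3 G)" if "G \<subseteq> C" "card G = 4" for G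
  proof -
    have "is_tiling G (sm V (\<lambda>v. S v \<inter> Lambda3 G))"
      using local that voters by (intro condorcet_super_domainD) auto
    then show ?thesis by (simp add: sm_Int)
  qed
  ultimately show "is_tiling C (sm V S)"
    unfolding is_tiling_iff_local[of C] by blast
qed

theorem proposition1:
  fixes n :: nat and D :: "nat set set set"
  assumes "n \<ge> 4"
    and "\<forall>T\<in>D. is_tiling {1..n} T"
  shows "condorcet_super_domain {1..n} D \<longleftrightarrow>
    (\<forall>F. F \<subseteq> {1..n} \<and> card F = 4 \<longrightarrow>
       condorcet_super_domain F ((\<lambda>T. T \<inter> Lambda3 F) ` D))"
proof -
  have "\<forall>T\<in>D. T \<subseteq> Lambda3 {1..n}"
    using assms(2) unfolding is_tiling_def by blast
  then show ?thesis
    using condorcet_super_domain_restrict[of "{1..n}" D] condorcet_super_domain_if_local[of D]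
    by blast
qed

end
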